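(* Let $\hat g:\mathbb C\to\mathbb C$ be the map defined in the context. Then $\hat g$ is differentiable almost everywhere and $$|\det D\hat g(z)|\ge\frac{\sin\theta_{\mathcal S}\,\min_{x\in Q}|\mathfrak h_{gen}(x)|\,\lambda\,e^{2\lambda\operatorname{Re} z}}{2L}\quad\text{for almost every }z\in\mathbb C.$$
   Context: Let $Q=[-1,1]^2$ and let $\mathfrak h_{gen}=(\mathfrak h_{gen,1},\mathfrak h_{gen,2},\mathfrak h_{gen,3}):Q\to\mathbb R^3$ be a sense-preserving $L$-bi-Lipschitz map ($|a-b|/L\le|\mathfrak h_{gen}(a)-\mathfrak h_{gen}(b)|\le L|a-b|$) onto a surface $\mathcal S=\mathfrak h_{gen}(Q)$ such that: (1) $\mathcal S\subset\{x_3\ge0\}$; (2) $\mathfrak h_{gen}(\partial Q)$ lies in the plane $x_3=0$; (3) for each $x\in Q$ the ray from $0$ through $\mathfrak h_{gen}(x)$ meets $\mathcal S$ only at $\mathfrak h_{gen}(x)$; (4) (non-tangential position vector property) there are $\theta_{\mathcal S}\in(0,\pi/2)$ and $\varepsilon>0$ such that for all distinct $w,z\in\mathcal S$ with $|w-z|\le\varepsilon$ the acute angle between the line through $0$ and $z$ and the line through $w$ and $z$ is greater than $\theta_{\mathcal S}$; (5) $\min_{x\in Q}|\mathfrak h_{gen}(x)|>0$. Assume also $\mathfrak h_{gen,1}(t,t)=\mathfrak h_{gen,2}(t,t)$, $\mathfrak h_{gen,1}(t,-t)=-\mathfrak h_{gen,2}(t,-t)$ for $t\in[-1,1]$, $\mathfrak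 h_{gen}(0,0)=(0,0,1)$ and $\sup_{x\in Q}|\mathfrak h_{gen}(x)|=1$. Let $\lambda\ge1$. Define $\hat g$ as follows: for $z=x+iy$ with $y\in[4k-1,4k+1]$, $k\in\mathbb Z$, let $\hat g(z)=e^{\lambda x}\big(\mathfrak h_{gen,3}(y-4k,y-4k)+i\,\mathfrak h_{gen,1}(y-4k,y-4k)\big)$; for $y\in[4k+1,4k+3]$ let $\hat g(z)=\hat g(\bar z+2i)$. (This is the conjugate, via $(x_1,x_1,x_3)\mapsto(x_3+ix_1)/\lambda$, of the generalized Zorich map $\mathcal Z_{gen}$ built from $h_{gen}=\lambda\mathfrak h_{gen}(\cdot/\lambda)$, restricted to the invariant plane $x_1=x_2$.) *)

theory Defs
  imports "HOL-Analysis.Analysis" "HOL-Complex_Analysis.Complex_Analysis"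
begin

definition sqQ :: "(real \<times> real) set" where
  "sqQ = {-1..1} \<times> {-1..1}"

definition sqQ_boundary :: "real \<Rightarrow> real \<times> real" where
  "sqQ_boundary = linepath (-1,-1) (1,-1) +++ linepath (1,-1) (1,1)
      +++ linepath (1,1) (-1,1) +++ linepath (-1,1) (-1,-1)"

text \<open>Sense-preserving (w.r.t. the upward orientation of the surface, which lies in
  the upper half-space with boundary curve in the plane x3 = 0): the boundary curve
  h(boundary Q), projected to the plane x3 = 0 (identified with C), winds once
  positively around the origin.\<close>
definition sense_preserving_surf :: "(real \<times> real \<Rightarrow> real^3) \<Rightarrow> bool" where
  "sense_preserving_surf h \<longleftrightarrow>
     winding_number (\<lambda>t. Complex (h (sqQ_boundary t) $ 1) (h (sqQ_boundary t) $ 2)) 0 = 1"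

definition bi_lipschitz_on :: "real \<Rightarrow> ('a::metric_space) set \<Rightarrow> ('a \<Rightarrow> 'b::metric_space) \<Rightarrow> bool" where
  "bi_lipschitz_on L S f \<longleftrightarrow>
     (\<forall>a\<in>S. \<forall>b\<in>S. dist a b / L \<le> dist (f a) (f b) \<and> dist (f a) (f b) \<le> L * dist a b)"

definition acute_line_angle :: "real^3 \<Rightarrow> real^3 \<Rightarrow> real" where
  "acute_line_angle z w = arccos (\<bar>z \<bullet> (w - z)\<bar> / (norm z * norm (w - z)))"

definition ghat_strip :: "(real \<times> real \<Rightarrow> real^3) \<Rightarrow> real \<Rightarrow> complex \<Rightarrow> complex" where
  "ghat_strip h lam z =
     (let k = \<lfloor>(Im z + 1) / 4\<rfloor>; s = Im z - 4 * real_of_int k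
      in complex_of_real (exp (lam * Re z)) * Complex (h (s, s) $ 3) (h (s, s) $ 1))"

definition ghat :: "(real \<times> real \<Rightarrow> real^3) \<Rightarrow> real \<Rightarrow> complex \<Rightarrow> complex" where
  "ghat h lam z =
     (if Im z - 4 * real_of_int \<lfloor>(Im z + 1) / 4\<rfloor> \<le> 1 then ghat_strip h lam z
      else ghat_strip h lam (cnj z + 2 * \<i>))"

definition jac_det :: "(complex \<Rightarrow> complex) \<Rightarrow> complex \<Rightarrow> real" where
  "jac_det f z = (let D = frechet_derivative f (at z) in
      Re (D 1) * Im (D \<i>) - Im (D 1) * Re (D \<i>))"

end

theory Submission
  imports Defs
begin

text \<open>On the strip around Im z = 4k (and, by the reflection in the definition, on the one around
  4k + 2) the map is ghat(z) = exp(lam Re z) (c3(s) + i c1(s)), where s = +-Im z + 2j and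
  c(t) = h(t, t) is the diagonal curve of the surface. Wherever c is differentiable the Jacobian
  is therefore +-lam exp(2 lam Re z) (c3 c1' - c1 c3').

  The curve c is Lipschitz, hence differentiable almost everywhere. This is proved with the Vitali
  covering theorem: for a monotone g (namely c_i(t) + K t), the set where the lower and upper
  Dini derivates of g straddle two rationals p < q is null, because covering it twice by small
  intervals on which the slope of g is below p, respectively above q, would give
  q * measure <= p * measure.

  At a point of differentiability, c2 = c1 and Lagrange's identity give
  2 (c3 c1' - c1 c3')^2 = |c|^2 |c'|^2 - (c . c')^2. Non-tangency of the position vector bounds
  (c . c')^2 by cos^2 theta |c|^2 |c'|^2, the bi-Lipschitz property gives |c'|^2 >= 2 / L^2, and
  |c| >= min |h|.\<close>

section \<open>Lipschitz functions on the line are differentiable almost everywhere\<close>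

lemma finite_subfamily_measure_Diff_less:
  assumes C: "countable C" and S: "S \<in> lmeasurable"
    and B: "\<And>i. i \<in> C \<Longrightarrow> B i \<in> sets lebesgue"
    and N: "negligible (S - (\<Union>i\<in>C. B i))" and e: "e > 0"
  obtains F where "finite F" "F \<subseteq> C" "measure lebesgue (S - (\<Union>i\<in>F. B i)) < e"
proof (cases "C = {}")
  case True
  then show ?thesis
    using N e that[of "{}"] by (simp add: negligible_iff_measure)
next
  case False
  define f where "f = from_nat_into C"
  have f: "range f = C"
    unfolding f_def using C False by (simp add: range_from_nat_into)
  define A where "A n = S - (\<Union>k\<le>n. B (f k))" for n
  have A_sets: "range A \<subseteq> sets lebesgue"
    unfolding A_def using S f B by (auto intro!: sets.Diff sets.finite_UN)
  have "decseq A"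
    unfolding A_def decseq_def by auto
  moreover have "emeasure lebesgue (A n) \<noteq> \<infinity>" for n
  proof -
    have "A n \<in> lmeasurable"
      using S f B unfolding A_def by (intro fmeasurable_Diff sets.finite_UN) auto
    then show ?thesis unfolding infinity_ennreal_def by (rule fmeasurableD2)
  qed
  ultimately have "(\<lambda>n. measure lebesgue (A n)) \<longlonglongrightarrow> measure lebesgue (\<Inter>n. A n)"
    using A_sets by (intro Lim_measure_decseq)
  moreover have "(\<Inter>n. A n) = S - (\<Union>i\<in>C. B i)"
    unfolding A_def f[symmetric] by auto
  ultimately have "(\<lambda>n. measure lebesgue (A n)) \<longlonglongrightarrow> 0"
    using N by (simp add: negligible_iff_measure)
  then have "\<forall>\<^sub>F n in sequentially. measure lebesgue (A n) < e"
    using e by (rule order_tendstoD)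
  then obtain n where "measure lebesgue (A n) < e"
    by (auto simp: eventually_sequentially)
  moreover have "A n = S - (\<Union>i\<in>f ` {..n}. B i)"
    unfolding A_def by auto
  ultimately show ?thesis
    using that[of "f ` {..n}"] f by auto
qed

lemma Vitali_finite_disjoint_cballs:
  fixes a :: "'i \<Rightarrow> 'n::euclidean_space"
  assumes S: "S \<in> lmeasurable" and e: "e > 0"
    and r: "\<And>i. i \<in> K \<Longrightarrow> 0 < r i"
    and fine: "\<And>x d. x \<in> S \<Longrightarrow> 0 < d \<Longrightarrow> \<exists>i\<in>K. x \<in> cball (a i) (r i) \<and> r i < d"
  obtains F where "finite F" "F \<subseteq> K"
    "pairwise (\<lambda>i j. disjnt (cball (a i) (r i)) (cball (a j) (r j))) F"
    "measure lebesgue (S - (\<Union>i\<in>F. cball (a i) (r i))) < e"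
proof -
  have fine': "\<exists>i. i \<in> K \<and> x \<in> cball (a i) (r i) \<and> r i < d" if "x \<in> S" "0 < d" for x d
    using fine[OF that] by blast
  obtain C where C: "countable C" "C \<subseteq> K"
    "pairwise (\<lambda>i j. disjnt (cball (a i) (r i)) (cball (a j) (r j))) C"
    "negligible (S - (\<Union>i\<in>C. cball (a i) (r i)))"
    by (rule Vitali_covering_theorem_cballs[of K r S a, OF r fine'])
  obtain F where F: "finite F" "F \<subseteq> C" "measure lebesgue (S - (\<Union>i\<in>F. cball (a i) (r i))) < e"
    using finite_subfamily_measure_Diff_less[OF C(1) S _ C(4) e] by auto
  show ?thesis
  proof (rule that[OF F(1) _ pairwise_subset[OF C(3) F(2)] F(3)])
    show "F \<subseteq> K" using F(2) C(2) by (rule order_trans)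
  qed
qed

lemma measure_UN_pairwise_disjnt:
  assumes "finite F" "pairwise (\<lambda>i j. disjnt (A i) (A j)) F" "\<And>i. i \<in> F \<Longrightarrow> A i \<in> lmeasurable"
  shows "measure lebesgue (\<Union>i\<in>F. A i) = (\<Sum>i\<in>F. measure lebesgue (A i))"
proof (rule measure_finite_Union)
  show "disjoint_family_on A F"
    using assms(2) by (auto simp: disjoint_family_on_def pairwise_def disjnt_def)
  show "A ` F \<subseteq> sets lebesgue"
    using assms(3) by (auto intro: fmeasurableD)
  show "emeasure lebesgue (A i) \<noteq> \<infinity>" if "i \<in> F" for i
    unfolding infinity_ennreal_def by (rule fmeasurableD2[OF assms(3)[OF that]])
qed (use assms(1) in simp)

lemma disjnt_cball_real_separated:
  fixes a b r s :: real
  assumes "disjnt (cball a r) (cball b s)" "0 \<le> r" "0 \<le> s"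
  shows "a + r < b - s \<or> b + s < a - r"
proof (rule ccontr)
  assume "\<not> ?thesis"
  then have "max (a - r) (b - s) \<in> cball a r \<inter> cball b s"
    using assms by (auto simp: dist_real_def max_def)
  then show False
    using assms(1) by (auto simp: disjnt_def)
qed

lemma sum_increments_eq_measure_image_intervals:
  fixes g :: "real \<Rightarrow> real"
  assumes g: "mono g" and F: "finite F" "\<And>i. i \<in> F \<Longrightarrow> 0 \<le> r i"
    and disj: "pairwise (\<lambda>i j. disjnt (cball (a i) (r i)) (cball (a j) (r j))) F"
  shows "(\<Sum>i\<in>F. g (a i + r i) - g (a i - r i)) =
         measure lebesgue (\<Union>i\<in>F. {g (a i - r i)<..<g (a i + r i)})"
proof -
  have "pairwise (\<lambda>i j. disjnt {g (a i - r i)<..<g (a i + r i)} {g (a j - r j)<..<g (a j + r j)}) F"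
  proof (intro pairwiseI)
    fix i j assume ij: "i \<in> F" "j \<in> F" "i \<noteq> j"
    then have "a i + r i < a j - r j \<or> a j + r j < a i - r i"
      using disj F(2) by (intro disjnt_cball_real_separated) (auto simp: pairwise_def)
    then have "g (a i + r i) \<le> g (a j - r j) \<or> g (a j + r j) \<le> g (a i - r i)"
      using g by (auto simp: mono_def)
    then show "disjnt {g (a i - r i)<..<g (a i + r i)} {g (a j - r j)<..<g (a j + r j)}"
      by (auto simp: disjnt_def)
  qed
  then have "measure lebesgue (\<Union>i\<in>F. {g (a i - r i)<..<g (a i + r i)}) =
      (\<Sum>i\<in>F. measure lebesgue {g (a i - r i)<..<g (a i + r i)})"
    using F(1) by (intro measure_UN_pairwise_disjnt) auto
  also have "\<dots> = (\<Sum>i\<in>F. g (a i + r i) - g (a i - r i))"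
    using g F(2) by (intro sum.cong) (auto simp: mono_def)
  finally show ?thesis ..
qed

lemma measure_image_intervals_le_sum_increments:
  fixes g :: "real \<Rightarrow> real"
  assumes g: "mono g" and F: "finite F" "\<And>i. i \<in> F \<Longrightarrow> 0 \<le> r i"
  shows "measure lebesgue (\<Union>i\<in>F. {g (a i - r i)<..<g (a i + r i)}) \<le>
         (\<Sum>i\<in>F. g (a i + r i) - g (a i - r i))"
proof -
  have "measure lebesgue (\<Union>i\<in>F. {g (a i - r i)<..<g (a i + r i)}) \<le>
      (\<Sum>i\<in>F. measure lebesgue {g (a i - r i)<..<g (a i + r i)})"
    using F(1) by (intro measure_UNION_le) auto
  also have "\<dots> = (\<Sum>i\<in>F. g (a i + r i) - g (a i - r i))"
    using g F(2) by (intro sum.cong) (auto simp: mono_def)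
  finally show ?thesis .
qed

lemma difference_quotient_cball:
  fixes g :: "real \<Rightarrow> real"
  assumes "h \<noteq> 0"
  shows "(g (x + h/2 + \<bar>h\<bar>/2) - g (x + h/2 - \<bar>h\<bar>/2)) / (2 * (\<bar>h\<bar>/2)) = (g (x + h) - g x) / h"
proof (cases "h > 0")
  case True
  then show ?thesis by (simp add: add.commute)
next
  case False
  then have eqs: "x + h/2 + \<bar>h\<bar>/2 = x" "x + h/2 - \<bar>h\<bar>/2 = x + h" "2 * (\<bar>h\<bar>/2) = - h"
    by simp_all
  show ?thesis
    unfolding eqs using assms by (simp add: field_simps)
qed

lemma frequently_difference_quotient_cball:
  fixes g :: "real \<Rightarrow> real"
  assumes freq: "\<exists>\<^sub>F h in at 0. P ((g (x + h) - g x) / h)"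
    and V: "open V" "x \<in> V" and d: "0 < d"
  obtains c r where "0 < r" "r < d" "x \<in> cball c r" "cball c r \<subseteq> V"
    "P ((g (c + r) - g (c - r)) / (2 * r))"
proof -
  obtain \<delta> where \<delta>: "\<delta> > 0" "ball x \<delta> \<subseteq> V"
    using V open_contains_ball by blast
  have "\<forall>e>0. \<exists>h. h \<noteq> 0 \<and> \<bar>h\<bar> < e \<and> P ((g (x + h) - g x) / h)"
    using freq unfolding frequently_at by (simp add: dist_real_def)
  then obtain h where h: "h \<noteq> 0" "\<bar>h\<bar> < min \<delta> d" "P ((g (x + h) - g x) / h)"
    using \<delta>(1) d by (meson min_less_iff_conj)
  have "cball (x + h/2) (\<bar>h\<bar>/2) \<subseteq> ball x \<delta>"
    using h(2) by (auto simp: dist_real_def abs_if split: if_splits)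
  moreover have "x \<in> cball (x + h/2) (\<bar>h\<bar>/2)"
    by (simp add: dist_real_def)
  ultimately show ?thesis
    using that[of "\<bar>h\<bar>/2" "x + h/2"] h \<delta>(2) difference_quotient_cball[OF h(1), of g x]
    by auto
qed

lemma Vitali_difference_quotient_cover:
  fixes g :: "real \<Rightarrow> real"
  assumes S: "S \<in> lmeasurable" and e: "e > 0"
    and opens: "\<And>x. x \<in> S \<Longrightarrow> \<exists>U\<in>\<U>. open U \<and> x \<in> U"
    and freq: "\<And>x. x \<in> S \<Longrightarrow> \<exists>\<^sub>F h in at 0. P ((g (x + h) - g x) / h)"
  obtains F where "finite F"
    "pairwise (\<lambda>i j. disjnt (cball (fst i) (snd i)) (cball (fst j) (snd j))) F"
    "\<And>i. i \<in> F \<Longrightarrow> 0 < snd i \<and> (\<exists>U\<in>\<U>. cball (fst i) (snd i) \<subseteq> U) \<and>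
       P ((g (fst i + snd i) - g (fst i - snd i)) / (2 * snd i))"
    "measure lebesgue (S - (\<Union>i\<in>F. cball (fst i) (snd i))) < e"
proof -
  define K where "K = {i. 0 < snd i \<and> (\<exists>U\<in>\<U>. cball (fst i) (snd i) \<subseteq> U) \<and>
       P ((g (fst i + snd i) - g (fst i - snd i)) / (2 * snd i))}"
  have fine: "\<exists>i\<in>K. x \<in> cball (fst i) (snd i) \<and> snd i < d" if "x \<in> S" "0 < d" for x d
  proof -
    obtain U where "U \<in> \<U>" "open U" "x \<in> U"
      using opens \<open>x \<in> S\<close> by blast
    obtain c r where "0 < r" "r < d" "x \<in> cball c r" "cball c r \<subseteq> U"
      "P ((g (c + r) - g (c - r)) / (2 * r))"
      using frequently_difference_quotient_cball[OF freq[OF \<open>x \<in> S\<close>] \<open>open U\<close> \<open>x \<in> U\<close> \<open>0 < d\<close>] .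
    with \<open>U \<in> \<U>\<close> show ?thesis
      unfolding K_def by (intro bexI[of _ "(c, r)"]) auto
  qed
  have "\<And>i. i \<in> K \<Longrightarrow> 0 < snd i"
    by (simp add: K_def)
  then obtain F where F: "finite F" "F \<subseteq> K"
      "pairwise (\<lambda>i j. disjnt (cball (fst i) (snd i)) (cball (fst j) (snd j))) F"
      "measure lebesgue (S - (\<Union>i\<in>F. cball (fst i) (snd i))) < e"
    using Vitali_finite_disjoint_cballs[OF S e, of K snd fst] fine by blast
  show ?thesis
  proof (rule that[OF F(1) F(3) _ F(4)])
    fix i assume "i \<in> F"
    with F(2) show "0 < snd i \<and> (\<exists>U\<in>\<U>. cball (fst i) (snd i) \<subseteq> U) \<and>
       P ((g (fst i + snd i) - g (fst i - snd i)) / (2 * snd i))"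
      by (auto simp: K_def)
  qed
qed

lemma lmeasurable_outer_open:
  assumes S: "S \<in> lmeasurable" and e: "0 < e"
  obtains U where "open U" "S \<subseteq> U" "U \<in> lmeasurable" "measure lebesgue U < measure lebesgue S + e"
proof -
  obtain U where U: "open U" "S \<subseteq> U" "U - S \<in> lmeasurable" "emeasure lebesgue (U - S) < ennreal e"
    using sets_lebesgue_outer_open[OF fmeasurableD[OF S] e] .
  have "U = S \<union> (U - S)"
    using U(2) by blast
  then have "U \<in> lmeasurable" "measure lebesgue U \<le> measure lebesgue S + measure lebesgue (U - S)"
    using S U(3) by (metis fmeasurable.Un, metis fmeasurableD measure_Un_le)
  moreover have "measure lebesgue (U - S) < e"
    using U(3,4) e by (simp add: emeasure_eq_measure2 ennreal_less_iff)
  ultimately show ?thesis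
    using that U(1,2) by fastforce
qed

lemma measure_le_Int_UN_balls_plus_Diff:
  fixes a :: "'i \<Rightarrow> 'n::euclidean_space"
  assumes S: "S \<in> lmeasurable" and F: "finite F"
  shows "measure lebesgue S \<le> measure lebesgue (S \<inter> (\<Union>i\<in>F. ball (a i) (r i))) +
           measure lebesgue (S - (\<Union>i\<in>F. cball (a i) (r i)))"
proof -
  define B where "B = S \<inter> (\<Union>i\<in>F. ball (a i) (r i))"
  define D where "D = S - (\<Union>i\<in>F. cball (a i) (r i))"
  define Z where "Z = (\<Union>i\<in>F. sphere (a i) (r i))"
  have meas: "B \<in> lmeasurable" "D \<in> lmeasurable"
    unfolding B_def D_def using S F by (auto intro!: fmeasurable_Int_fmeasurable fmeasurable_Diff sets.finite_UN)
  have Z: "negligible Z"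
    unfolding Z_def using F by (intro negligible_Union) (auto simp: negligible_sphere)
  then have "Z \<in> lmeasurable" "measure lebesgue Z = 0"
    by (simp_all add: negligible_iff_measure)
  moreover have "S \<subseteq> (B \<union> D) \<union> Z"
    unfolding B_def D_def Z_def by (auto simp: less_eq_real_def)
  ultimately have "measure lebesgue S \<le> measure lebesgue (B \<union> D) + measure lebesgue Z"
    using S meas by (meson fmeasurable.Un fmeasurableD measure_Un_le measure_mono_fmeasurable order_trans)
  also have "\<dots> \<le> measure lebesgue B + measure lebesgue D"
    using meas \<open>measure lebesgue Z = 0\<close> by (simp add: fmeasurableD measure_Un_le)
  finally show ?thesis
    by (simp add: B_def D_def)
qed

lemma measure_le_sum_cballs_plus_Diff:
  fixes a :: "'i \<Rightarrow> 'n::euclidean_space"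
  assumes S: "S \<in> lmeasurable" and F: "finite F"
  shows "measure lebesgue S \<le> (\<Sum>i\<in>F. measure lebesgue (cball (a i) (r i))) +
           measure lebesgue (S - (\<Union>i\<in>F. cball (a i) (r i)))"
proof -
  define C where "C = (\<Union>i\<in>F. cball (a i) (r i))"
  have C: "C \<in> lmeasurable"
    unfolding C_def using F by (intro fmeasurable.finite_UN) auto
  then have "measure lebesgue S \<le> measure lebesgue (C \<union> (S - C))"
    using S by (intro measure_mono_fmeasurable) (auto intro: fmeasurableD)
  also have "\<dots> \<le> measure lebesgue C + measure lebesgue (S - C)"
    using C S by (intro measure_Un_le) (auto intro: fmeasurableD)
  also have "measure lebesgue C \<le> (\<Sum>i\<in>F. measure lebesgue (cball (a i) (r i)))"
    unfolding C_def using F by (intro measure_UNION_le) auto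
  finally show ?thesis
    by (simp add: C_def)
qed

lemma image_intervals_nested:
  fixes g :: "real \<Rightarrow> real"
  assumes g: "mono g"
    and nested: "\<And>i. i \<in> F \<Longrightarrow> \<exists>j\<in>G. cball (a i) (r i) \<subseteq> ball (a j) (r j)"
    and r: "\<And>i. i \<in> F \<Longrightarrow> 0 \<le> r i"
  shows "(\<Union>i\<in>F. {g (a i - r i)<..<g (a i + r i)}) \<subseteq> (\<Union>j\<in>G. {g (a j - r j)<..<g (a j + r j)})"
proof (intro UN_least subsetI)
  fix i y assume i: "i \<in> F" and y: "y \<in> {g (a i - r i)<..<g (a i + r i)}"
  obtain j where j: "j \<in> G" "cball (a i) (r i) \<subseteq> ball (a j) (r j)"
    using nested[OF i] by blast
  have "a i - r i \<in> ball (a j) (r j)" "a i + r i \<in> ball (a j) (r j)"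
    using j(2) r[OF i] by (auto simp: dist_real_def subset_iff)
  then have "g (a j - r j) \<le> g (a i - r i)" "g (a i + r i) \<le> g (a j + r j)"
    using g by (auto simp: mono_def dist_real_def)
  with y show "y \<in> (\<Union>j\<in>G. {g (a j - r j)<..<g (a j + r j)})"
    by (intro UN_I[OF j(1)]) auto
qed

lemma measure_cball_real:
  fixes c r :: real
  assumes "0 \<le> r"
  shows "measure lebesgue (cball c r) = 2 * r"
  using assms by (simp add: cball_eq_atLeastAtMost)

lemma nested_slope_families_bound:
  fixes g :: "real \<Rightarrow> real"
  assumes g: "mono g"
    and F1: "finite F1" "\<And>i. i \<in> F1 \<Longrightarrow> 0 < snd i \<and>
      (g (fst i + snd i) - g (fst i - snd i)) / (2 * snd i) < p"
    and F2: "finite F2" "pairwise (\<lambda>i j. disjnt (cball (fst i) (snd i)) (cball (fst j) (snd j))) F2"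
      "\<And>i. i \<in> F2 \<Longrightarrow> 0 < snd i \<and> (\<exists>j\<in>F1. cball (fst i) (snd i) \<subseteq> ball (fst j) (snd j)) \<and>
         q < (g (fst i + snd i) - g (fst i - snd i)) / (2 * snd i)"
  shows "q * (\<Sum>i\<in>F2. 2 * snd i) \<le> p * (\<Sum>i\<in>F1. 2 * snd i)"
proof -
  define inc where "inc i = g (fst i + snd i) - g (fst i - snd i)" for i :: "real \<times> real"
  \<comment> \<open>the image intervals of the disjoint inner family are disjoint and lie in those of the outer one\<close>
  define io where "io i = {g (fst i - snd i)<..<g (fst i + snd i)}" for i :: "real \<times> real"
  have "q * (\<Sum>i\<in>F2. 2 * snd i) \<le> (\<Sum>i\<in>F2. inc i)"
    unfolding sum_distrib_left
  proof (rule sum_mono)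
    fix i assume "i \<in> F2"
    then have "0 < 2 * snd i" "q < inc i / (2 * snd i)"
      using F2(3) by (auto simp: inc_def)
    then show "q * (2 * snd i) \<le> inc i"
      by (simp add: pos_less_divide_eq less_imp_le)
  qed
  also have "\<dots> = measure lebesgue (\<Union>i\<in>F2. io i)"
    unfolding inc_def io_def using F2 g
    by (intro sum_increments_eq_measure_image_intervals) (auto simp: less_imp_le)
  also have "\<dots> \<le> measure lebesgue (\<Union>i\<in>F1. io i)"
  proof (rule measure_mono_fmeasurable)
    show "(\<Union>i\<in>F2. io i) \<subseteq> (\<Union>i\<in>F1. io i)"
      unfolding io_def using F2(3) g by (intro image_intervals_nested) (auto simp: less_imp_le)
  qed (use F1(1) F2(1) in \<open>auto simp: io_def\<close>)
  also have "\<dots> \<le> (\<Sum>i\<in>F1. inc i)"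
    unfolding inc_def io_def using F1 g
    by (intro measure_image_intervals_le_sum_increments) (auto simp: less_imp_le)
  also have "\<dots> \<le> p * (\<Sum>i\<in>F1. 2 * snd i)"
    unfolding sum_distrib_left
  proof (rule sum_mono)
    fix i assume "i \<in> F1"
    then have "0 < 2 * snd i" "inc i / (2 * snd i) < p"
      using F1(2) by (auto simp: inc_def)
    then show "inc i \<le> p * (2 * snd i)"
      by (simp add: pos_divide_less_eq less_imp_le mult.commute)
  qed
  finally show ?thesis .
qed

lemma measure_Dini_gap_le:
  fixes g :: "real \<Rightarrow> real"
  assumes g: "mono g" and S: "S \<in> lmeasurable" and pq: "0 < p" "p < q" and \<epsilon>: "0 < \<epsilon>"
    and low: "\<And>x. x \<in> S \<Longrightarrow> \<exists>\<^sub>F h in at 0. (g (x + h) - g x) / h < p"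
    and up: "\<And>x. x \<in> S \<Longrightarrow> \<exists>\<^sub>F h in at 0. q < (g (x + h) - g x) / h"
  shows "measure lebesgue S \<le> p / q * (measure lebesgue S + \<epsilon>) + 2 * \<epsilon>"
proof -
  let ?\<mu> = "measure lebesgue"
  obtain U where U: "open U" "S \<subseteq> U" "U \<in> lmeasurable" "?\<mu> U < ?\<mu> S + \<epsilon>"
    using lmeasurable_outer_open[OF S \<epsilon>] .
  obtain F1 where F1: "finite F1"
      "pairwise (\<lambda>i j. disjnt (cball (fst i) (snd i)) (cball (fst j) (snd j))) F1"
      "\<And>i. i \<in> F1 \<Longrightarrow> 0 < snd i \<and> (\<exists>V\<in>{U}. cball (fst i) (snd i) \<subseteq> V) \<and>
         (g (fst i + snd i) - g (fst i - snd i)) / (2 * snd i) < p"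
      "?\<mu> (S - (\<Union>i\<in>F1. cball (fst i) (snd i))) < \<epsilon>"
    by (rule Vitali_difference_quotient_cover[OF S \<epsilon>, where \<U>="{U}" and g=g and P="\<lambda>Q. Q < p"])
      (use U low in blast)+
  define S' where "S' = S \<inter> (\<Union>i\<in>F1. ball (fst i) (snd i))"
  have S': "S' \<in> lmeasurable"
    unfolding S'_def using S F1(1) by (intro fmeasurable_Int_fmeasurable sets.finite_UN) auto
  have S_le: "?\<mu> S \<le> ?\<mu> S' + \<epsilon>"
    using measure_le_Int_UN_balls_plus_Diff[OF S F1(1), of fst snd] F1(4)
    unfolding S'_def by linarith
  obtain F2 where F2: "finite F2"
      "pairwise (\<lambda>i j. disjnt (cball (fst i) (snd i)) (cball (fst j) (snd j))) F2"
      "\<And>i. i \<in> F2 \<Longrightarrow> 0 < snd i \<and>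
         (\<exists>V\<in>(\<lambda>j. ball (fst j) (snd j)) ` F1. cball (fst i) (snd i) \<subseteq> V) \<and>
         q < (g (fst i + snd i) - g (fst i - snd i)) / (2 * snd i)"
      "?\<mu> (S' - (\<Union>i\<in>F2. cball (fst i) (snd i))) < \<epsilon>"
    by (rule Vitali_difference_quotient_cover[OF S' \<epsilon>,
          where \<U>="(\<lambda>j. ball (fst j) (snd j)) ` F1" and g=g and P="\<lambda>Q. q < Q"])
      (use up in \<open>auto simp: S'_def\<close>)+
  have "(\<Sum>i\<in>F2. ?\<mu> (cball (fst i) (snd i))) = (\<Sum>i\<in>F2. 2 * snd i)"
    using F2(3) by (intro sum.cong refl measure_cball_real) (auto intro: less_imp_le)
  then have S'_le: "?\<mu> S' \<le> (\<Sum>i\<in>F2. 2 * snd i) + \<epsilon>"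
    using measure_le_sum_cballs_plus_Diff[OF S' F2(1), of fst snd] F2(4) by linarith
  have "(\<Sum>i\<in>F1. 2 * snd i) = (\<Sum>i\<in>F1. ?\<mu> (cball (fst i) (snd i)))"
    using F1(3) by (intro sum.cong refl measure_cball_real[symmetric]) (auto intro: less_imp_le)
  also have "\<dots> = ?\<mu> (\<Union>i\<in>F1. cball (fst i) (snd i))"
    using F1(1,2) by (intro measure_UN_pairwise_disjnt[symmetric]) auto
  also have "\<dots> \<le> ?\<mu> U"
    using F1(1,3) U(3) by (intro measure_mono_fmeasurable) auto
  finally have F1_le: "(\<Sum>i\<in>F1. 2 * snd i) \<le> ?\<mu> U" .
  have "q * (\<Sum>i\<in>F2. 2 * snd i) \<le> p * (\<Sum>i\<in>F1. 2 * snd i)"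
  proof (rule nested_slope_families_bound[OF g F1(1) _ F2(1,2)])
    show "\<And>i. i \<in> F1 \<Longrightarrow> 0 < snd i \<and> (g (fst i + snd i) - g (fst i - snd i)) / (2 * snd i) < p"
      using F1(3) by blast
    show "\<And>i. i \<in> F2 \<Longrightarrow> 0 < snd i \<and> (\<exists>j\<in>F1. cball (fst i) (snd i) \<subseteq> ball (fst j) (snd j)) \<and>
        q < (g (fst i + snd i) - g (fst i - snd i)) / (2 * snd i)"
      using F2(3) by blast
  qed
  also have "\<dots> \<le> p * (?\<mu> S + \<epsilon>)"
    using F1_le U(4) pq by (intro mult_left_mono) auto
  finally have "(\<Sum>i\<in>F2. 2 * snd i) \<le> p / q * (?\<mu> S + \<epsilon>)"
    using pq by (simp add: field_simps)
  with S_le S'_le show ?thesis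
    by linarith
qed

lemma measure_Dini_gap_eq_0:
  fixes g :: "real \<Rightarrow> real"
  assumes g: "mono g" and S: "S \<in> lmeasurable" and pq: "0 < p" "p < q"
    and low: "\<And>x. x \<in> S \<Longrightarrow> \<exists>\<^sub>F h in at 0. (g (x + h) - g x) / h < p"
    and up: "\<And>x. x \<in> S \<Longrightarrow> \<exists>\<^sub>F h in at 0. q < (g (x + h) - g x) / h"
  shows "measure lebesgue S = 0"
proof -
  let ?\<mu> = "measure lebesgue S"
  define a where "a = p / q"
  have a: "0 < a" "a < 1"
    using pq by (auto simp: a_def)
  have "?\<mu> \<le> a * ?\<mu>"
  proof (rule field_le_epsilon)
    fix e :: real assume "0 < e"
    then have "0 < e / (a + 2)"
      using a by simp
    from measure_Dini_gap_le[OF g S pq this low up]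
    have "?\<mu> \<le> a * (?\<mu> + e / (a + 2)) + 2 * (e / (a + 2))"
      by (simp add: a_def)
    also have "\<dots> = a * ?\<mu> + (a + 2) * (e / (a + 2))"
      by (simp add: algebra_simps add_divide_distrib)
    also have "\<dots> = a * ?\<mu> + e"
      using a by simp
    finally show "?\<mu> \<le> a * ?\<mu> + e" .
  qed
  then have "(1 - a) * ?\<mu> \<le> 0"
    by (simp add: algebra_simps)
  with a have "?\<mu> \<le> 0"
    by (simp add: mult_le_0_iff)
  then show ?thesis
    using measure_nonneg[of lebesgue S] by linarith
qed

lemma frequently_difference_quotient_sets_lebesgue:
  fixes g :: "real \<Rightarrow> real"
  assumes g: "continuous_on UNIV g" and T: "open T"
  shows "{x. \<exists>\<^sub>F h in at 0. (g (x + h) - g x) / h \<in> T} \<in> sets lebesgue"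
proof -
  define A where "A n = (\<Union>h\<in>{h. h \<noteq> 0 \<and> \<bar>h\<bar> < inverse (real (Suc n))}.
      (\<lambda>x. (g (x + h) - g x) / h) -` T)" for n
  have "continuous_on UNIV (\<lambda>x. (g (x + h) - g x) * inverse h)" for h
    by (intro continuous_intros continuous_on_compose2[OF g]) auto
  then have "open ((\<lambda>x. (g (x + h) - g x) / h) -` T)" for h
    using T by (simp add: open_vimage divide_inverse)
  then have "open (A n)" for n
    unfolding A_def by blast
  moreover have "{x. \<exists>\<^sub>F h in at 0. (g (x + h) - g x) / h \<in> T} = (\<Inter>n. A n)"
  proof (intro set_eqI iffI)
    fix x assume "x \<in> {x. \<exists>\<^sub>F h in at 0. (g (x + h) - g x) / h \<in> T}"
    then have "\<forall>d>0. \<exists>h. h \<noteq> 0 \<and> \<bar>h\<bar> < d \<and> (g (x + h) - g x) / h \<in> T"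
      by (simp add: frequently_at dist_real_def)
    then show "x \<in> (\<Inter>n. A n)"
      unfolding A_def by (auto simp del: of_nat_Suc)
  next
    fix x assume x: "x \<in> (\<Inter>n. A n)"
    have "\<exists>h. h \<noteq> 0 \<and> \<bar>h\<bar> < d \<and> (g (x + h) - g x) / h \<in> T" if "0 < d" for d
    proof -
      obtain n where "inverse (real (Suc n)) < d"
        using reals_Archimedean \<open>0 < d\<close> by blast
      moreover obtain h where "h \<noteq> 0" "\<bar>h\<bar> < inverse (real (Suc n))" "(g (x + h) - g x) / h \<in> T"
        using x unfolding A_def by blast
      ultimately show ?thesis
        by (intro exI[of _ h]) auto
    qed
    then show "x \<in> {x. \<exists>\<^sub>F h in at 0. (g (x + h) - g x) / h \<in> T}"
      by (simp add: frequently_at dist_real_def)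
  qed
  ultimately show ?thesis
    by auto
qed

lemma tendsto_of_no_rational_gap:
  fixes Q :: "'a \<Rightarrow> real"
  assumes F: "F \<noteq> bot" and bnd: "\<forall>\<^sub>F x in F. a \<le> Q x \<and> Q x \<le> b"
    and nogap: "\<And>p q. p \<in> \<rat> \<Longrightarrow> q \<in> \<rat> \<Longrightarrow> p < q \<Longrightarrow>
                  \<not> ((\<exists>\<^sub>F x in F. Q x < p) \<and> (\<exists>\<^sub>F x in F. q < Q x))"
  shows "\<exists>D. (Q \<longlongrightarrow> D) F"
proof -
  define A where "A = Liminf F (\<lambda>x. ereal (Q x))"
  define B where "B = Limsup F (\<lambda>x. ereal (Q x))"
  have "ereal a \<le> A"
    unfolding A_def by (rule Liminf_bounded) (use bnd in \<open>auto elim: eventually_mono\<close>)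
  moreover have "B \<le> ereal b"
    unfolding B_def by (rule Limsup_bounded) (use bnd in \<open>auto elim: eventually_mono\<close>)
  moreover have AB: "A \<le> B"
    unfolding A_def B_def by (rule Liminf_le_Limsup[OF F])
  ultimately obtain a' b' where a': "A = ereal a'" and b': "B = ereal b'"
    by (cases A; cases B) auto
  have "\<not> a' < b'"
  proof
    assume "a' < b'"
    then obtain p where p: "p \<in> \<rat>" "a' < p" "p < b'"
      using Rats_dense_in_real by blast
    then obtain q where q: "q \<in> \<rat>" "p < q" "q < b'"
      using Rats_dense_in_real by blast
    have "\<exists>\<^sub>F x in F. Q x < p"
    proof (rule ccontr)
      assume "\<not> (\<exists>\<^sub>F x in F. Q x < p)"
      then have "\<forall>\<^sub>F x in F. ereal p \<le> ereal (Q x)"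
        by (simp add: not_frequently not_less)
      then have "ereal p \<le> A"
        unfolding A_def by (rule Liminf_bounded)
      then show False
        using a' p by simp
    qed
    moreover have "\<exists>\<^sub>F x in F. q < Q x"
    proof (rule ccontr)
      assume "\<not> (\<exists>\<^sub>F x in F. q < Q x)"
      then have "\<forall>\<^sub>F x in F. ereal (Q x) \<le> ereal q"
        by (simp add: not_frequently not_less)
      then have "B \<le> ereal q"
        unfolding B_def by (rule Limsup_bounded)
      then show False
        using b' q by simp
    qed
    ultimately show False
      using nogap[OF p(1) q(1) q(2)] by blast
  qed
  with AB a' b' have "A = B"
    by simp
  then have "((\<lambda>x. ereal (Q x)) \<longlongrightarrow> ereal a') F"
    using a' by (intro Liminf_eq_Limsup[OF F]) (auto simp: A_def B_def)
  then show ?thesis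
    by (auto simp: lim_ereal)
qed

lemma mono_difference_quotient_nonneg:
  fixes g :: "real \<Rightarrow> real"
  assumes "mono g" "h \<noteq> 0"
  shows "0 \<le> (g (x + h) - g x) / h"
proof (cases "0 < h")
  case True
  then show ?thesis
    using assms(1) by (simp add: mono_def)
next
  case False
  with assms have "h < 0" "g (x + h) \<le> g x"
    by (auto simp: mono_def)
  then show ?thesis
    by (simp add: divide_nonpos_neg)
qed

lemma negligible_Dini_gap:
  fixes g :: "real \<Rightarrow> real"
  assumes g: "mono g" "continuous_on UNIV g" and pq: "p < q"
  shows "negligible {x. (\<exists>\<^sub>F h in at 0. (g (x + h) - g x) / h < p) \<and>
                        (\<exists>\<^sub>F h in at 0. q < (g (x + h) - g x) / h)}" (is "negligible ?E")
proof (cases "0 < p")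
  case False
  have "\<not> (\<exists>\<^sub>F h in at 0. (g (x + h) - g x) / h < p)" for x
  proof -
    have "\<forall>\<^sub>F h in at 0. h \<noteq> (0::real)"
      by (simp add: eventually_at_filter)
    then have "\<forall>\<^sub>F h in at 0. \<not> (g (x + h) - g x) / h < p"
      by eventually_elim (use False mono_difference_quotient_nonneg[OF g(1)] in \<open>smt (verit)\<close>)
    then show ?thesis
      by (simp add: not_frequently)
  qed
  then show ?thesis
    by simp
next
  case True
  have "{x. \<exists>\<^sub>F h in at 0. (g (x + h) - g x) / h < p} \<in> sets lebesgue"
       "{x. \<exists>\<^sub>F h in at 0. q < (g (x + h) - g x) / h} \<in> sets lebesgue"
    using frequently_difference_quotient_sets_lebesgue[OF g(2), of "{..<p}"]
      frequently_difference_quotient_sets_lebesgue[OF g(2), of "{q<..}"] by simp_all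
  then have E: "?E \<in> sets lebesgue"
    unfolding Collect_conj_eq by (rule sets.Int)
  have neg: "negligible (?E \<inter> ball 0 (real n))" for n
  proof -
    have S: "?E \<inter> ball 0 (real n) \<in> lmeasurable"
      using E by (simp add: fmeasurable_Int_fmeasurable Int_commute)
    then have "measure lebesgue (?E \<inter> ball 0 (real n)) = 0"
      by (rule measure_Dini_gap_eq_0[OF g(1) _ True pq]) auto
    with S show ?thesis
      by (simp add: negligible_iff_measure)
  qed
  have "?E = (\<Union>n. ?E \<inter> ball 0 (real n))"
  proof -
    have "\<exists>n. \<bar>x\<bar> < real n" for x :: real
      using reals_Archimedean2 by blast
    then show ?thesis
      by auto
  qed
  moreover have "negligible (\<Union>n. ?E \<inter> ball 0 (real n))"
    using neg by (intro negligible_countable_Union) auto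
  ultimately show ?thesis
    by simp
qed

lemma mono_lipschitz_differentiable_ae:
  fixes g :: "real \<Rightarrow> real"
  assumes g: "mono g" "K-lipschitz_on UNIV g"
  obtains N where "negligible N" "\<And>x. x \<notin> N \<Longrightarrow> g differentiable (at x)"
proof
  let ?Q = "\<lambda>x h. (g (x + h) - g x) / h"
  define N where "N = (\<Union>(p, q) \<in> {(p, q). p \<in> \<rat> \<and> q \<in> \<rat> \<and> p < q}.
      {x. (\<exists>\<^sub>F h in at 0. ?Q x h < p) \<and> (\<exists>\<^sub>F h in at 0. q < ?Q x h)})"
  have "countable {(p, q). p \<in> \<rat> \<and> q \<in> \<rat> \<and> (p::real) < q}"
    by (rule countable_subset[of _ "\<rat> \<times> \<rat>"]) (auto intro: countable_SIGMA countable_rat)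
  then show "negligible N"
    unfolding N_def using negligible_Dini_gap[OF g(1) lipschitz_on_continuous_on[OF g(2)]]
    by (intro negligible_countable_Union) auto
  fix x assume "x \<notin> N"
  have bnd: "\<forall>\<^sub>F h in at 0. 0 \<le> ?Q x h \<and> ?Q x h \<le> K"
  proof -
    have "\<forall>\<^sub>F h in at 0. h \<noteq> (0::real)"
      by (simp add: eventually_at_filter)
    then show ?thesis
    proof eventually_elim
      case (elim h)
      have "\<bar>g (x + h) - g x\<bar> \<le> K * \<bar>h\<bar>"
        using lipschitz_onD[OF g(2), of "x + h" x] by (simp add: dist_real_def)
      then have "?Q x h \<le> K"
        using elim by (simp add: divide_le_eq abs_le_iff abs_if split: if_splits)
      then show ?case
        using mono_difference_quotient_nonneg[OF g(1) elim] by simp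
    qed
  qed
  have nogap: "\<not> ((\<exists>\<^sub>F h in at 0. ?Q x h < p) \<and> (\<exists>\<^sub>F h in at 0. q < ?Q x h))"
    if "p \<in> \<rat>" "q \<in> \<rat>" "p < q" for p q
    using \<open>x \<notin> N\<close> that unfolding N_def by blast
  obtain D where "(?Q x \<longlongrightarrow> D) (at 0)"
    using tendsto_of_no_rational_gap[OF at_neq_bot bnd nogap] by blast
  then show "g differentiable (at x)"
    unfolding real_differentiable_def DERIV_def by blast
qed

lemma lipschitz_differentiable_ae:
  fixes f :: "real \<Rightarrow> real"
  assumes f: "K-lipschitz_on UNIV f"
  obtains N where "negligible N" "\<And>x. x \<notin> N \<Longrightarrow> f differentiable (at x)"
proof -
  define g where "g x = f x + K * x" for x
  have "mono g"
  proof (rule monoI)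
    fix x y :: real assume "x \<le> y"
    moreover have "\<bar>f y - f x\<bar> \<le> K * \<bar>y - x\<bar>"
      using lipschitz_onD[OF f, of y x] by (simp add: dist_real_def)
    ultimately show "g x \<le> g y"
      unfolding g_def by (simp add: abs_le_iff algebra_simps)
  qed
  moreover have "(K + \<bar>K\<bar> * 1)-lipschitz_on UNIV g"
    unfolding g_def by (intro lipschitz_on_add f lipschitz_on_cmult_real lipschitz_on_id)
  ultimately obtain N where N: "negligible N" "\<And>x. x \<notin> N \<Longrightarrow> g differentiable (at x)"
    using mono_lipschitz_differentiable_ae by blast
  have "f = (\<lambda>x. g x - K * x)"
    by (simp add: g_def)
  then have "f differentiable (at x)" if "x \<notin> N" for x
    using N(2)[OF that] by (simp add: differentiable_diff)
  with N(1) show ?thesis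
    using that by blast
qed

section \<open>The diagonal curve of the surface\<close>

definition diag_curve :: "(real \<times> real \<Rightarrow> real^3) \<Rightarrow> real \<Rightarrow> real^3" where
  "diag_curve h t = h (max (-1) (min 1 t), max (-1) (min 1 t))"

lemma diag_curve_eq: "t \<in> {-1..1} \<Longrightarrow> diag_curve h t = h (t, t)"
  by (simp add: diag_curve_def)

lemma diag_in_sqQ: "t \<in> {-1..1} \<Longrightarrow> (t, t) \<in> sqQ"
  by (simp add: sqQ_def)

lemma dist_diag: "dist (s, s) (t, t) = sqrt 2 * \<bar>s - t\<bar>"
  by (simp add: dist_Pair_Pair dist_real_def real_sqrt_mult flip: power2_eq_square)

lemma lipschitz_diag_curve_component:
  assumes L: "0 < L" and bilip: "bi_lipschitz_on L sqQ h"
  shows "(L * sqrt 2)-lipschitz_on UNIV (\<lambda>t. diag_curve h t $ i)"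
proof (rule lipschitz_onI)
  fix s t :: real
  define s' t' where "s' = max (-1) (min 1 s)" and "t' = max (-1) (min 1 t)"
  have "dist (diag_curve h s $ i) (diag_curve h t $ i) \<le> dist (h (s', s')) (h (t', t'))"
    unfolding diag_curve_def s'_def t'_def dist_norm
    by (metis component_le_norm_cart vector_minus_component real_norm_def)
  also have "\<dots> \<le> L * dist (s', s') (t', t')"
    using bilip diag_in_sqQ[of s'] diag_in_sqQ[of t'] unfolding bi_lipschitz_on_def
    by (simp add: s'_def t'_def)
  also have "\<dots> = L * (sqrt 2 * \<bar>s' - t'\<bar>)"
    by (simp add: dist_diag)
  also have "\<dots> \<le> L * sqrt 2 * dist s t"
  proof -
    have "\<bar>s' - t'\<bar> \<le> \<bar>s - t\<bar>"
      by (auto simp: s'_def t'_def max_def min_def abs_if)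
    then show ?thesis
      using L by (simp add: dist_real_def mult_left_mono)
  qed
  finally show "dist (diag_curve h s $ i) (diag_curve h t $ i) \<le> L * sqrt 2 * dist s t" .
qed (use L in simp)

lemma inner_real3: "(x::real^3) \<bullet> y = x$1 * y$1 + x$2 * y$2 + x$3 * y$3"
  by (simp add: inner_vec_def sum_3)

lemma norm_real3_power2: "(norm (x::real^3))\<^sup>2 = (x$1)\<^sup>2 + (x$2)\<^sup>2 + (x$3)\<^sup>2"
  unfolding power2_norm_eq_inner inner_real3 by (simp add: power2_eq_square)

lemma abs_inner_le_cos_of_acute_line_angle:
  assumes "\<theta> < acute_line_angle z w" "0 \<le> \<theta>"
  shows "\<bar>z \<bullet> (w - z)\<bar> \<le> cos \<theta> * (norm z * norm (w - z))"
proof (cases "norm z * norm (w - z) = 0")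
  case True
  then show ?thesis
    by auto
next
  case False
  then have pos: "0 < norm z * norm (w - z)"
    by simp
  define r where "r = \<bar>z \<bullet> (w - z)\<bar> / (norm z * norm (w - z))"
  have r: "0 \<le> r" "r \<le> 1"
    using pos Cauchy_Schwarz_ineq2[of z "w - z"] by (auto simp: r_def divide_le_eq_1)
  have "\<theta> < arccos r"
    using assms(1) by (simp add: acute_line_angle_def r_def)
  moreover have "arccos r \<le> pi"
    using r by (intro arccos_ubound) auto
  ultimately have "cos (arccos r) < cos \<theta>"
    using assms(2) by (intro cos_monotone_0_pi)
  then have "r < cos \<theta>"
    using r by simp
  then show ?thesis
    using pos by (simp add: r_def pos_divide_less_eq)
qed

lemma diag_secant_bounds:
  fixes h :: "real \<times> real \<Rightarrow> real^3"
  assumes L: "0 < L" and bilip: "bi_lipschitz_on L sqQ h" and \<theta>: "0 \<le> \<theta>"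
    and nontang: "\<forall>w\<in>h ` sqQ. \<forall>z\<in>h ` sqQ. w \<noteq> z \<and> dist w z \<le> \<epsilon> \<longrightarrow>
                     acute_line_angle z w > \<theta>"
    and diag: "\<forall>t\<in>{-1..1}. h (t, t) $ 1 = h (t, t) $ 2"
    and st: "s \<in> {-1..1}" "s0 \<in> {-1..1}" "s \<noteq> s0"
    and close: "L * (sqrt 2 * \<bar>s - s0\<bar>) \<le> \<epsilon>"
  defines "u \<equiv> (h (s, s) $ 1 - h (s0, s0) $ 1) / (s - s0)"
    and "v \<equiv> (h (s, s) $ 3 - h (s0, s0) $ 3) / (s - s0)"
    and "a \<equiv> h (s0, s0) $ 1" and "c \<equiv> h (s0, s0) $ 3"
  shows "2 / L\<^sup>2 \<le> 2 * u\<^sup>2 + v\<^sup>2"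
    and "(2 * a * u + c * v)\<^sup>2 \<le> (cos \<theta>)\<^sup>2 * (2 * a\<^sup>2 + c\<^sup>2) * (2 * u\<^sup>2 + v\<^sup>2)"
proof -
  define t where "t = s - s0"
  define P where "P = h (s0, s0)"
  define \<Delta> where "\<Delta> = h (s, s) - P"
  have t: "0 < t\<^sup>2"
    using st by (simp add: t_def)
  have "\<Delta> $ 1 = t * u" "\<Delta> $ 2 = t * u" "\<Delta> $ 3 = t * v" "P $ 2 = a"
    using st diag by (auto simp: \<Delta>_def P_def t_def u_def v_def a_def)
  then have norm_\<Delta>: "(norm \<Delta>)\<^sup>2 = t\<^sup>2 * (2 * u\<^sup>2 + v\<^sup>2)"
    and inner_P\<Delta>: "P \<bullet> \<Delta> = t * (2 * a * u + c * v)"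
    and norm_P: "(norm P)\<^sup>2 = 2 * a\<^sup>2 + c\<^sup>2"
    by (simp_all add: norm_real3_power2 inner_real3 a_def c_def P_def power_mult_distrib algebra_simps)
  have in_sqQ: "(s, s) \<in> sqQ" "(s0, s0) \<in> sqQ"
    using st by (simp_all add: diag_in_sqQ)
  then have "dist (s, s) (s0, s0) / L \<le> dist (h (s, s)) (h (s0, s0))"
      "dist (h (s, s)) (h (s0, s0)) \<le> L * dist (s, s) (s0, s0)"
    using bilip unfolding bi_lipschitz_on_def by blast+
  then have lower: "sqrt 2 * \<bar>t\<bar> / L \<le> norm \<Delta>" and "norm \<Delta> \<le> L * (sqrt 2 * \<bar>t\<bar>)"
    unfolding dist_diag by (simp_all add: dist_norm \<Delta>_def P_def t_def)
  with close have upper: "norm \<Delta> \<le> \<epsilon>"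
    by (simp add: t_def)
  have "t\<^sup>2 * (2 / L\<^sup>2) = (sqrt 2 * \<bar>t\<bar> / L)\<^sup>2"
    by (simp add: power_divide power_mult_distrib)
  also have "\<dots> \<le> t\<^sup>2 * (2 * u\<^sup>2 + v\<^sup>2)"
    unfolding norm_\<Delta>[symmetric] using lower L by (intro power_mono) auto
  finally show "2 / L\<^sup>2 \<le> 2 * u\<^sup>2 + v\<^sup>2"
    using t by (simp only: mult_le_cancel_left_pos)
  have "0 < sqrt 2 * \<bar>t\<bar> / L"
    using L st by (simp add: t_def)
  with lower have "\<Delta> \<noteq> 0"
    by auto
  then have "acute_line_angle P (h (s, s)) > \<theta>"
    using nontang in_sqQ upper by (auto simp: \<Delta>_def P_def dist_norm)
  then have "\<bar>P \<bullet> \<Delta>\<bar> \<le> cos \<theta> * (norm P * norm \<Delta>)"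
    using abs_inner_le_cos_of_acute_line_angle \<theta> by (simp add: \<Delta>_def)
  then have "\<bar>P \<bullet> \<Delta>\<bar>\<^sup>2 \<le> (cos \<theta> * (norm P * norm \<Delta>))\<^sup>2"
    by (intro power_mono) auto
  then have "(P \<bullet> \<Delta>)\<^sup>2 \<le> (cos \<theta>)\<^sup>2 * (norm P)\<^sup>2 * (norm \<Delta>)\<^sup>2"
    by (simp add: power_mult_distrib)
  then have "t\<^sup>2 * (2 * a * u + c * v)\<^sup>2 \<le> t\<^sup>2 * ((cos \<theta>)\<^sup>2 * (2 * a\<^sup>2 + c\<^sup>2) * (2 * u\<^sup>2 + v\<^sup>2))"
    unfolding inner_P\<Delta> norm_P norm_\<Delta> by (simp add: power_mult_distrib mult_ac)
  then show "(2 * a * u + c * v)\<^sup>2 \<le> (cos \<theta>)\<^sup>2 * (2 * a\<^sup>2 + c\<^sup>2) * (2 * u\<^sup>2 + v\<^sup>2)"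
    using t by (simp only: mult_le_cancel_left_pos)
qed

lemma cross_term_lower_bound:
  fixes a c d1 d3 :: real
  assumes L: "0 < L" and m: "0 \<le> m" "m\<^sup>2 \<le> 2 * a\<^sup>2 + c\<^sup>2" and sin: "0 \<le> sin \<theta>"
    and speed: "2 / L\<^sup>2 \<le> 2 * d1\<^sup>2 + d3\<^sup>2"
    and angle: "(2 * a * d1 + c * d3)\<^sup>2 \<le> (cos \<theta>)\<^sup>2 * (2 * a\<^sup>2 + c\<^sup>2) * (2 * d1\<^sup>2 + d3\<^sup>2)"
  shows "sin \<theta> * m / L \<le> \<bar>c * d1 - a * d3\<bar>"
proof -
  define N S where "N = 2 * a\<^sup>2 + c\<^sup>2" and "S = 2 * d1\<^sup>2 + d3\<^sup>2"
  \<comment> \<open>Lagrange's identity for the vectors (a, a, c) and (d1, d1, d3)\<close>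
  have lagrange: "N * S - (2 * a * d1 + c * d3)\<^sup>2 = 2 * (c * d1 - a * d3)\<^sup>2"
    by (simp add: N_def S_def power2_eq_square algebra_simps)
  have "(sin \<theta> * m / L)\<^sup>2 * 2 = (sin \<theta>)\<^sup>2 * (m\<^sup>2 * (2 / L\<^sup>2))"
    by (simp add: power_divide power_mult_distrib)
  also have "\<dots> \<le> (sin \<theta>)\<^sup>2 * (N * S)"
    using m speed by (intro mult_left_mono mult_mono) (auto simp: N_def S_def)
  also have "\<dots> = N * S - (cos \<theta>)\<^sup>2 * N * S"
    by (simp add: sin_squared_eq algebra_simps)
  also have "\<dots> \<le> 2 * (c * d1 - a * d3)\<^sup>2"
    using angle lagrange by (simp add: N_def S_def)
  finally have "(sin \<theta> * m / L)\<^sup>2 \<le> \<bar>c * d1 - a * d3\<bar>\<^sup>2"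
    by simp
  then show ?thesis
    by (rule power2_le_imp_le) simp
qed

lemma diag_cross_lower_bound:
  fixes h :: "real \<times> real \<Rightarrow> real^3"
  assumes L: "0 < L" and bilip: "bi_lipschitz_on L sqQ h"
    and \<theta>: "0 < \<theta>" "\<theta> < pi / 2" and \<epsilon>: "0 < \<epsilon>"
    and nontang: "\<forall>w\<in>h ` sqQ. \<forall>z\<in>h ` sqQ. w \<noteq> z \<and> dist w z \<le> \<epsilon> \<longrightarrow>
                     acute_line_angle z w > \<theta>"
    and diag: "\<forall>t\<in>{-1..1}. h (t, t) $ 1 = h (t, t) $ 2"
    and m: "0 \<le> m" "\<forall>x\<in>sqQ. m \<le> norm (h x)"
    and s0: "s0 \<in> {-1<..<1}"
    and d1: "((\<lambda>t. diag_curve h t $ 1) has_real_derivative d1) (at s0)"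
    and d3: "((\<lambda>t. diag_curve h t $ 3) has_real_derivative d3) (at s0)"
  shows "sin \<theta> * m / L \<le> \<bar>h (s0, s0) $ 3 * d1 - h (s0, s0) $ 1 * d3\<bar>"
proof -
  define a c where "a = h (s0, s0) $ 1" and "c = h (s0, s0) $ 3"
  define u where "u t = (diag_curve h (s0 + t) $ 1 - diag_curve h s0 $ 1) / t" for t
  define v where "v t = (diag_curve h (s0 + t) $ 3 - diag_curve h s0 $ 3) / t" for t
  have u: "(u \<longlongrightarrow> d1) (at 0)" and v: "(v \<longlongrightarrow> d3) (at 0)"
    using d1 d3 by (simp_all add: DERIV_def u_def[abs_def] v_def[abs_def])
  define \<delta> where "\<delta> = min (1 - \<bar>s0\<bar>) (\<epsilon> / (L * sqrt 2))"
  have "0 < \<delta>"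
    using s0 \<epsilon> L by (auto simp: \<delta>_def)
  then have near: "\<forall>\<^sub>F t in at 0. t \<noteq> 0 \<and> \<bar>t\<bar> < \<delta>"
    unfolding eventually_at by (auto simp: dist_real_def intro!: exI[of _ \<delta>])
  have secant: "2 / L\<^sup>2 \<le> 2 * (u t)\<^sup>2 + (v t)\<^sup>2 \<and>
      (2 * a * u t + c * v t)\<^sup>2 \<le> (cos \<theta>)\<^sup>2 * (2 * a\<^sup>2 + c\<^sup>2) * (2 * (u t)\<^sup>2 + (v t)\<^sup>2)"
    if "t \<noteq> 0" "\<bar>t\<bar> < \<delta>" for t
  proof -
    have st: "s0 + t \<in> {-1..1}" "s0 \<in> {-1..1}"
      using that s0 by (auto simp: \<delta>_def)
    have "L * (sqrt 2 * \<bar>s0 + t - s0\<bar>) \<le> \<epsilon>"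
      using that L by (simp add: \<delta>_def field_simps)
    from diag_secant_bounds[OF L bilip _ nontang diag st _ this] that \<theta>
    show ?thesis
      using st by (simp add: u_def v_def a_def c_def diag_curve_eq)
  qed
  have speed: "2 / L\<^sup>2 \<le> 2 * d1\<^sup>2 + d3\<^sup>2"
  proof (rule tendsto_le[OF at_neq_bot])
    show "((\<lambda>t. 2 * (u t)\<^sup>2 + (v t)\<^sup>2) \<longlongrightarrow> 2 * d1\<^sup>2 + d3\<^sup>2) (at 0)"
      by (intro tendsto_intros u v)
    show "\<forall>\<^sub>F t in at 0. 2 / L\<^sup>2 \<le> 2 * (u t)\<^sup>2 + (v t)\<^sup>2"
      using near by eventually_elim (use secant in blast)
  qed simp
  have angle: "(2 * a * d1 + c * d3)\<^sup>2 \<le> (cos \<theta>)\<^sup>2 * (2 * a\<^sup>2 + c\<^sup>2) * (2 * d1\<^sup>2 + d3\<^sup>2)"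
  proof (rule tendsto_le[OF at_neq_bot])
    show "((\<lambda>t. (cos \<theta>)\<^sup>2 * (2 * a\<^sup>2 + c\<^sup>2) * (2 * (u t)\<^sup>2 + (v t)\<^sup>2)) \<longlongrightarrow>
        (cos \<theta>)\<^sup>2 * (2 * a\<^sup>2 + c\<^sup>2) * (2 * d1\<^sup>2 + d3\<^sup>2)) (at 0)"
      by (intro tendsto_intros u v)
    show "((\<lambda>t. (2 * a * u t + c * v t)\<^sup>2) \<longlongrightarrow> (2 * a * d1 + c * d3)\<^sup>2) (at 0)"
      by (intro tendsto_intros u v)
    show "\<forall>\<^sub>F t in at 0. (2 * a * u t + c * v t)\<^sup>2 \<le>
        (cos \<theta>)\<^sup>2 * (2 * a\<^sup>2 + c\<^sup>2) * (2 * (u t)\<^sup>2 + (v t)\<^sup>2)"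
      using near by eventually_elim (use secant in blast)
  qed
  have "h (s0, s0) $ 2 = a"
    using diag s0 by (simp add: a_def)
  then have "(norm (h (s0, s0)))\<^sup>2 = 2 * a\<^sup>2 + c\<^sup>2"
    by (simp add: norm_real3_power2 a_def c_def)
  moreover have "m \<le> norm (h (s0, s0))"
    using m(2) s0 by (simp add: diag_in_sqQ)
  ultimately have "m\<^sup>2 \<le> 2 * a\<^sup>2 + c\<^sup>2"
    using m(1) by (metis power_mono)
  moreover have "0 \<le> sin \<theta>"
    using \<theta> by (intro sin_ge_zero) auto
  ultimately show ?thesis
    using cross_term_lower_bound[OF L m(1) _ _ speed angle] by (simp add: a_def c_def)
qed

section \<open>The Jacobian of ghat\<close>

lemma exp_Re_curve_Im_jac_det:
  fixes g1 g3 :: "real \<Rightarrow> real" and G :: "complex \<Rightarrow> complex" and \<sigma> \<beta> :: real and z :: complex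
  defines "s \<equiv> \<sigma> * Im z + \<beta>"
  assumes d1: "(g1 has_real_derivative d1) (at s)" and d3: "(g3 has_real_derivative d3) (at s)"
    and V: "open V" "z \<in> V"
    and G: "\<And>w. w \<in> V \<Longrightarrow>
      G w = of_real (exp (lam * Re w)) * Complex (g3 (\<sigma> * Im w + \<beta>)) (g1 (\<sigma> * Im w + \<beta>))"
  shows "G differentiable (at z)"
    and "jac_det G z = \<sigma> * lam * (exp (lam * Re z))\<^sup>2 * (g3 s * d1 - g1 s * d3)"
proof -
  define E where "E = exp (lam * Re z)"
  define D where "D w = of_real (E * lam * Re w) * Complex (g3 s) (g1 s) +
      of_real (E * \<sigma> * Im w) * Complex d3 d1" for w
  have \<phi>: "((\<lambda>w. \<sigma> * Im w + \<beta>) has_derivative (\<lambda>w. \<sigma> * Im w)) (at z)"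
    by (auto intro!: derivative_eq_intros)
  have "((\<lambda>w. g1 (\<sigma> * Im w + \<beta>)) has_derivative (\<lambda>w. d1 * (\<sigma> * Im w))) (at z)"
    using has_derivative_compose[OF \<phi> has_field_derivative_imp_has_derivative[OF d1[unfolded s_def]]]
    by simp
  moreover have "((\<lambda>w. g3 (\<sigma> * Im w + \<beta>)) has_derivative (\<lambda>w. d3 * (\<sigma> * Im w))) (at z)"
    using has_derivative_compose[OF \<phi> has_field_derivative_imp_has_derivative[OF d3[unfolded s_def]]]
    by simp
  moreover have "((\<lambda>w. exp (lam * Re w)) has_derivative (\<lambda>w. E * (lam * Re w))) (at z)"
    unfolding E_def by (auto intro!: derivative_eq_intros)
  ultimately have "((\<lambda>w. of_real (exp (lam * Re w)) *
      (of_real (g3 (\<sigma> * Im w + \<beta>)) + \<i> * of_real (g1 (\<sigma> * Im w + \<beta>)))) has_derivative D) (at z)"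
    unfolding D_def s_def
    by (auto intro!: derivative_eq_intros has_derivative_of_real simp: Complex_eq E_def algebra_simps)
  then have GD: "(G has_derivative D) (at z)"
    by (rule has_derivative_transform_within_open[OF _ V]) (simp add: G Complex_eq)
  then show "G differentiable (at z)"
    by (auto simp: differentiable_def)
  have "frechet_derivative G (at z) = D"
    using frechet_derivative_at[OF GD] by simp
  moreover have "D 1 = of_real (E * lam) * Complex (g3 s) (g1 s)" "D \<i> = of_real (E * \<sigma>) * Complex d3 d1"
    by (simp_all add: D_def)
  ultimately show "jac_det G z = \<sigma> * lam * (exp (lam * Re z))\<^sup>2 * (g3 s * d1 - g1 s * d3)"
    by (simp add: jac_det_def E_def power2_eq_square algebra_simps)
qed

lemma floor_quarter_eq:
  "4 * of_int k - 1 \<le> y \<Longrightarrow> y < 4 * of_int k + 3 \<Longrightarrow> \<lfloor>(y + 1) / 4\<rfloor> = k"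
  by (simp add: floor_eq_iff field_simps)

lemma ghat_strip_eq:
  assumes "4 * of_int k - 1 < Im w" "Im w < 4 * of_int k + 1"
  shows "ghat_strip h lam w = of_real (exp (lam * Re w)) *
    Complex (diag_curve h (Im w - 4 * of_int k) $ 3) (diag_curve h (Im w - 4 * of_int k) $ 1)"
  using assms floor_quarter_eq[of k "Im w"] by (simp add: ghat_strip_def diag_curve_eq Let_def)

lemma ghat_local_form:
  assumes odd: "\<And>n::int. Im z \<noteq> 2 * of_int n + 1"
  obtains \<sigma> :: real and j :: int and V where "\<sigma> \<in> {-1, 1}" "open V" "z \<in> V"
    "\<sigma> * Im z + 2 * of_int j \<in> {-1<..<1}"
    "\<And>w. w \<in> V \<Longrightarrow> ghat h lam w = of_real (exp (lam * Re w)) *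
        Complex (diag_curve h (\<sigma> * Im w + 2 * of_int j) $ 3) (diag_curve h (\<sigma> * Im w + 2 * of_int j) $ 1)"
proof -
  define k where "k = \<lfloor>(Im z + 1) / 4\<rfloor>"
  have "4 * of_int k - 1 \<le> Im z" "Im z < 4 * of_int k + 3"
    using floor_correct[of "(Im z + 1) / 4"] unfolding k_def[symmetric] by (simp_all add: field_simps)
  moreover have "Im z \<noteq> 4 * of_int k - 1" "Im z \<noteq> 4 * of_int k + 1"
    using odd[of "2 * k - 1"] odd[of "2 * k"] by simp_all
  ultimately consider "4 * of_int k - 1 < Im z" "Im z < 4 * of_int k + 1"
    | "4 * of_int k + 1 < Im z" "Im z < 4 * of_int k + 3"
    by linarith
  then show ?thesis
  proof cases
    case 1
    let ?V = "{w. 4 * of_int k - 1 < Im w \<and> Im w < 4 * of_int k + 1}"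
    show ?thesis
    proof (rule that[of 1 ?V "- 2 * k"])
      show "open ?V"
        by (simp add: Collect_conj_eq open_Collect_less continuous_on_Im open_Int)
      fix w assume "w \<in> ?V"
      then have "\<lfloor>(Im w + 1) / 4\<rfloor> = k"
        by (intro floor_quarter_eq) auto
      moreover have "ghat_strip h lam w = of_real (exp (lam * Re w)) *
          Complex (diag_curve h (Im w - 4 * of_int k) $ 3) (diag_curve h (Im w - 4 * of_int k) $ 1)"
        using \<open>w \<in> ?V\<close> by (intro ghat_strip_eq) auto
      ultimately show "ghat h lam w = of_real (exp (lam * Re w)) *
          Complex (diag_curve h (1 * Im w + 2 * of_int (- 2 * k)) $ 3)
            (diag_curve h (1 * Im w + 2 * of_int (- 2 * k)) $ 1)"
        using \<open>w \<in> ?V\<close> by (simp add: ghat_def algebra_simps)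
    qed (use 1 in auto)
  next
    case 2
    let ?V = "{w. 4 * of_int k + 1 < Im w \<and> Im w < 4 * of_int k + 3}"
    show ?thesis
    proof (rule that[of "-1" ?V "2 * k + 1"])
      show "open ?V"
        by (simp add: Collect_conj_eq open_Collect_less continuous_on_Im open_Int)
      fix w assume "w \<in> ?V"
      then have "\<lfloor>(Im w + 1) / 4\<rfloor> = k"
        by (intro floor_quarter_eq) auto
      moreover have "ghat_strip h lam (cnj w + 2 * \<i>) = of_real (exp (lam * Re (cnj w + 2 * \<i>))) *
          Complex (diag_curve h (Im (cnj w + 2 * \<i>) - 4 * of_int (- k)) $ 3)
            (diag_curve h (Im (cnj w + 2 * \<i>) - 4 * of_int (- k)) $ 1)"
        using \<open>w \<in> ?V\<close> by (intro ghat_strip_eq) auto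
      ultimately show "ghat h lam w = of_real (exp (lam * Re w)) *
          Complex (diag_curve h (-1 * Im w + 2 * of_int (2 * k + 1)) $ 3)
            (diag_curve h (-1 * Im w + 2 * of_int (2 * k + 1)) $ 1)"
        using \<open>w \<in> ?V\<close> by (simp add: ghat_def algebra_simps)
    qed (use 2 in auto)
  qed
qed

lemma negligible_Im_vimage:
  assumes "negligible (N :: real set)"
  shows "negligible {z::complex. Im z \<in> N}"
proof -
  obtain N' where N': "N' \<in> null_sets lborel" "N \<subseteq> N'"
    using assms by (auto simp: negligible_iff_null_sets null_sets_completion_iff2)
  have "UNIV \<times> N' \<in> null_sets (lborel \<Otimes>\<^sub>M lborel)"
    using N'(1) by (intro lborel.times_in_null_sets2) auto
  then have "UNIV \<times> N' \<in> null_sets (lborel :: (real \<times> real) measure)"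
    by (simp add: lborel_prod)
  then have "UNIV \<times> N' \<in> null_sets (completion (lborel :: (real \<times> real) measure))"
    by (rule null_sets_completionI)
  then have "negligible (UNIV \<times> N' :: (real \<times> real) set)"
    by (simp add: negligible_iff_null_sets)
  moreover have "linear (\<lambda>p. Complex (fst p) (snd p))"
    by (rule linearI) (auto simp: complex_eq_iff)
  ultimately have "negligible ((\<lambda>p. Complex (fst p) (snd p)) ` (UNIV \<times> N'))"
    by (intro negligible_differentiable_image_negligible linear_imp_differentiable_on) auto
  moreover have "{z. Im z \<in> N} \<subseteq> (\<lambda>p. Complex (fst p) (snd p)) ` (UNIV \<times> N')"
    using N'(2) by (auto intro!: image_eqI[of _ _ "(Re z, Im z)" for z])
  ultimately show ?thesis
    by (rule negligible_subset)
qed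

lemma negligible_reflections_even_shifts:
  assumes N: "negligible (N :: real set)"
  shows "negligible {y. \<exists>j::int. \<exists>\<sigma>\<in>{-1, 1}. \<sigma> * y + 2 * of_int j \<in> N}"
proof -
  define f where "f p = (\<lambda>t. snd p * t - snd p * (2 * of_int (fst p))) ` N" for p :: "int \<times> real"
  have eq: "{y. \<exists>j::int. \<exists>\<sigma>\<in>{-1, 1}. \<sigma> * y + 2 * of_int j \<in> N} = \<Union>(f ` (UNIV \<times> {-1, 1}))"
  proof (intro set_eqI iffI)
    fix y assume "y \<in> {y. \<exists>j::int. \<exists>\<sigma>\<in>{-1, 1}. \<sigma> * y + 2 * of_int j \<in> N}"
    then obtain j :: int and \<sigma> :: real where \<sigma>: "\<sigma> \<in> {-1, 1}" "\<sigma> * y + 2 * of_int j \<in> N"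
      by blast
    moreover from \<sigma>(1) have "y = \<sigma> * (\<sigma> * y + 2 * of_int j) - \<sigma> * (2 * of_int j)"
      by auto
    ultimately have "y \<in> f (j, \<sigma>)"
      unfolding f_def by (intro image_eqI[of _ _ "\<sigma> * y + 2 * of_int j"]) auto
    with \<sigma>(1) show "y \<in> \<Union>(f ` (UNIV \<times> {-1, 1}))"
      by blast
  next
    fix y assume "y \<in> \<Union>(f ` (UNIV \<times> {-1, 1}))"
    then obtain j \<sigma> where p: "\<sigma> \<in> {-1, 1}" "y \<in> f (j, \<sigma>)"
      by blast
    then obtain t where "t \<in> N" "y = \<sigma> * t - \<sigma> * (2 * of_int j)"
      by (auto simp: f_def)
    moreover from this p(1) have "\<sigma> * y + 2 * of_int j = t"
      by auto
    ultimately have "\<exists>\<sigma>\<in>{-1, 1}. \<sigma> * y + 2 * of_int j \<in> N"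
      using p(1) by auto
    then show "y \<in> {y. \<exists>j::int. \<exists>\<sigma>\<in>{-1, 1}. \<sigma> * y + 2 * of_int j \<in> N}"
      by blast
  qed
  have "negligible (f p)" for p
    unfolding f_def using N by (intro negligible_differentiable_image_negligible) (auto intro!: derivative_intros)
  then show ?thesis
    unfolding eq by (intro negligible_countable_Union) auto
qed

lemma AE_lborel_not_in_negligible:
  fixes B :: "'a::euclidean_space set"
  assumes "negligible B"
  shows "AE x in lborel. x \<notin> B"
  using assms unfolding negligible_iff_null_sets by (metis AE_completion_iff AE_not_in)

lemma ghat_jac_det_lower_bound:
  fixes h :: "real \<times> real \<Rightarrow> real^3" and N :: "real set"
  assumes L: "0 < L" and bilip: "bi_lipschitz_on L sqQ h"
    and \<theta>: "0 < \<theta>" "\<theta> < pi / 2" and \<epsilon>: "0 < \<epsilon>"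
    and nontang: "\<forall>w\<in>h ` sqQ. \<forall>z\<in>h ` sqQ. w \<noteq> z \<and> dist w z \<le> \<epsilon> \<longrightarrow>
                     acute_line_angle z w > \<theta>"
    and diag: "\<forall>t\<in>{-1..1}. h (t, t) $ 1 = h (t, t) $ 2"
    and m: "0 \<le> m" "\<forall>x\<in>sqQ. m \<le> norm (h x)" and lam: "0 \<le> lam"
    and N: "{-1, 1} \<subseteq> N" "\<And>t. t \<notin> N \<Longrightarrow>
      (\<lambda>t. diag_curve h t $ 1) differentiable (at t) \<and> (\<lambda>t. diag_curve h t $ 3) differentiable (at t)"
    and z: "\<And>(j::int) \<sigma>. \<sigma> \<in> {-1, 1} \<Longrightarrow> \<sigma> * Im z + 2 * of_int j \<notin> N"
  shows "ghat h lam differentiable (at z) \<and>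
    sin \<theta> * m * lam * exp (2 * lam * Re z) / L \<le> \<bar>jac_det (ghat h lam) z\<bar>"
proof -
  have "Im z \<noteq> 2 * of_int n + 1" for n :: int
    using z[of 1 "- n"] N(1) by auto
  then obtain \<sigma> :: real and j :: int and V where \<sigma>: "\<sigma> \<in> {-1, 1}" and V: "open V" "z \<in> V"
    and s: "\<sigma> * Im z + 2 * of_int j \<in> {-1<..<1}"
    and ghat: "\<And>w. w \<in> V \<Longrightarrow> ghat h lam w = of_real (exp (lam * Re w)) *
        Complex (diag_curve h (\<sigma> * Im w + 2 * of_int j) $ 3) (diag_curve h (\<sigma> * Im w + 2 * of_int j) $ 1)"
    by (rule ghat_local_form[where h=h and lam=lam]) auto
  define s where "s = \<sigma> * Im z + 2 * of_int j"
  obtain d1 d3 where d1: "((\<lambda>t. diag_curve h t $ 1) has_real_derivative d1) (at s)"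
      and d3: "((\<lambda>t. diag_curve h t $ 3) has_real_derivative d3) (at s)"
    using N(2)[of s] z[OF \<sigma>, of j] by (auto simp: s_def real_differentiable_def)
  have jac: "ghat h lam differentiable (at z)"
    "jac_det (ghat h lam) z = \<sigma> * lam * (exp (lam * Re z))\<^sup>2 * (h (s, s) $ 3 * d1 - h (s, s) $ 1 * d3)"
    using exp_Re_curve_Im_jac_det[of "\<lambda>t. diag_curve h t $ 1" d1 \<sigma> z "2 * of_int j"
        "\<lambda>t. diag_curve h t $ 3" d3 V "ghat h lam" lam] d1 d3 V ghat s
    by (simp_all add: s_def diag_curve_eq)
  have "sin \<theta> * m / L \<le> \<bar>h (s, s) $ 3 * d1 - h (s, s) $ 1 * d3\<bar>"
    using diag_cross_lower_bound[OF L bilip \<theta> \<epsilon> nontang diag m _ d1 d3] s by (simp add: s_def)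
  then have "lam * (exp (lam * Re z))\<^sup>2 * (sin \<theta> * m / L) \<le>
      lam * (exp (lam * Re z))\<^sup>2 * \<bar>h (s, s) $ 3 * d1 - h (s, s) $ 1 * d3\<bar>"
    using lam by (intro mult_left_mono) auto
  also have "\<dots> = \<bar>jac_det (ghat h lam) z\<bar>"
    using \<sigma> lam by (auto simp: jac(2) abs_mult)
  finally have "lam * (exp (lam * Re z))\<^sup>2 * (sin \<theta> * m / L) \<le> \<bar>jac_det (ghat h lam) z\<bar>" .
  moreover have "(exp (lam * Re z))\<^sup>2 = exp (2 * lam * Re z)"
    by (simp add: power2_eq_square flip: exp_add)
  ultimately show ?thesis
    using jac(1) by (simp add: field_simps)
qed

lemma ghat_jac_det_lower_bound_ae:
  fixes h :: "real \<times> real \<Rightarrow> real^3"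
  assumes L: "0 < L" and bilip: "bi_lipschitz_on L sqQ h"
    and \<theta>: "0 < \<theta>" "\<theta> < pi / 2" and \<epsilon>: "0 < \<epsilon>"
    and nontang: "\<forall>w\<in>h ` sqQ. \<forall>z\<in>h ` sqQ. w \<noteq> z \<and> dist w z \<le> \<epsilon> \<longrightarrow>
                     acute_line_angle z w > \<theta>"
    and diag: "\<forall>t\<in>{-1..1}. h (t, t) $ 1 = h (t, t) $ 2"
    and m: "0 \<le> m" "\<forall>x\<in>sqQ. m \<le> norm (h x)" and lam: "0 \<le> lam"
  shows "AE z in lborel. ghat h lam differentiable (at z) \<and>
    sin \<theta> * m * lam * exp (2 * lam * Re z) / L \<le> \<bar>jac_det (ghat h lam) z\<bar>"
proof -
  obtain N1 where N1: "negligible N1" "\<And>t. t \<notin> N1 \<Longrightarrow> (\<lambda>t. diag_curve h t $ 1) differentiable (at t)"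
    using lipschitz_differentiable_ae[OF lipschitz_diag_curve_component[OF L bilip]] by blast
  obtain N3 where N3: "negligible N3" "\<And>t. t \<notin> N3 \<Longrightarrow> (\<lambda>t. diag_curve h t $ 3) differentiable (at t)"
    using lipschitz_differentiable_ae[OF lipschitz_diag_curve_component[OF L bilip]] by blast
  define N where "N = N1 \<union> N3 \<union> {-1, 1}"
  define B where "B = {z. Im z \<in> {y. \<exists>j::int. \<exists>\<sigma>\<in>{-1, 1}. \<sigma> * y + 2 * of_int j \<in> N}}"
  have "negligible B"
    unfolding B_def N_def using N1(1) N3(1)
    by (intro negligible_Im_vimage negligible_reflections_even_shifts) auto
  moreover have "ghat h lam differentiable (at z) \<and>
      sin \<theta> * m * lam * exp (2 * lam * Re z) / L \<le> \<bar>jac_det (ghat h lam) z\<bar>" if "z \<notin> B" for z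
  proof (rule ghat_jac_det_lower_bound[OF L bilip \<theta> \<epsilon> nontang diag m lam])
    show "{-1, 1} \<subseteq> N"
      by (auto simp: N_def)
  qed (use N1(2) N3(2) that in \<open>auto simp: N_def B_def\<close>)
  ultimately show ?thesis
    using AE_lborel_not_in_negligible[of B] by (auto elim: eventually_mono)
qed

theorem lemma7p1:
  fixes h :: "real \<times> real \<Rightarrow> real^3" and L \<theta> \<epsilon> lam :: real
  assumes L_pos: "L > 0"
    and bilip: "bi_lipschitz_on L sqQ h"
    and sense: "sense_preserving_surf h"
    and upper: "\<forall>x\<in>sqQ. h x $ 3 \<ge> 0"
    and bdry: "\<forall>x\<in>frontier sqQ. h x $ 3 = 0"
    and ray: "\<forall>x\<in>sqQ. \<forall>y\<in>sqQ. \<forall>r::real. r \<ge> 0 \<and> h y = r *\<^sub>R h x \<longrightarrow> h y = h x"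
    and theta: "0 < \<theta>" "\<theta> < pi / 2" "\<epsilon> > 0"
    and nontang: "\<forall>w\<in>h ` sqQ. \<forall>z\<in>h ` sqQ. w \<noteq> z \<and> dist w z \<le> \<epsilon> \<longrightarrow>
                     acute_line_angle z w > \<theta>"
    and minpos: "(INF x\<in>sqQ. norm (h x)) > 0"
    and diag1: "\<forall>t\<in>{-1..1}. h (t, t) $ 1 = h (t, t) $ 2"
    and diag2: "\<forall>t\<in>{-1..1}. h (t, -t) $ 1 = - h (t, -t) $ 2"
    and center: "h (0, 0) = vector [0, 0, 1]"
    and supnorm: "(SUP x\<in>sqQ. norm (h x)) = 1"
    and lam: "lam \<ge> 1"
  shows "AE z in lborel. ghat h lam differentiable (at z) \<and>
           \<bar>jac_det (ghat h lam) z\<bar> \<ge>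
             sin \<theta> * (INF x\<in>sqQ. norm (h x)) * lam * exp (2 * lam * Re z) / (2 * L)"
proof -
  define m where "m = (INF x\<in>sqQ. norm (h x))"
  have m: "0 \<le> m" "\<forall>x\<in>sqQ. m \<le> norm (h x)"
    using minpos unfolding m_def by (auto intro!: cINF_lower bdd_belowI2[where m=0])
  have "AE z in lborel. ghat h lam differentiable (at z) \<and>
      sin \<theta> * m * lam * exp (2 * lam * Re z) / L \<le> \<bar>jac_det (ghat h lam) z\<bar>"
    using ghat_jac_det_lower_bound_ae[OF L_pos bilip theta nontang diag1 m] lam by simp
  then show ?thesis
  proof (rule eventually_mono)
    fix z :: complex
    assume z: "ghat h lam differentiable (at z) \<and>
      sin \<theta> * m * lam * exp (2 * lam * Re z) / L \<le> \<bar>jac_det (ghat h lam) z\<bar>"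
    have "0 \<le> sin \<theta> * m * lam * exp (2 * lam * Re z)"
      using theta m(1) lam by (simp add: sin_ge_zero)
    then have "sin \<theta> * m * lam * exp (2 * lam * Re z) / (2 * L) \<le> sin \<theta> * m * lam * exp (2 * lam * Re z) / L"
      using L_pos by (intro divide_left_mono) auto
    with z show "ghat h lam differentiable (at z) \<and>
        sin \<theta> * (INF x\<in>sqQ. norm (h x)) * lam * exp (2 * lam * Re z) / (2 * L) \<le> \<bar>jac_det (ghat h lam) z\<bar>"
      unfolding m_def by (meson order_trans)
  qed
qed

end
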